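(* Let $E$ be a second countable Stone space with at least seven points, and let $\gamma$ be a non-peripheral cut of $E$. Then $\gamma$ is outermost if and only if for every pants decomposition $\Gamma$ of $E$ containing $\gamma$, the vertex $\gamma$ has valence at most two in the adjacency graph $A(\Gamma)$.
   Context: A Stone space is a compact, Hausdorff, totally disconnected space. A cut of $E$ is an unordered partition of $E$ into two disjoint clopen sets $U,V$, written $U\sqcup V$; it is non-peripheral if each of $U,V$ contains at least two points. A non-peripheral cut is outermost if one of its two sides contains exactly two points. Two cuts $U\sqcup V$, $U'\sqcup V'$ cross if all four sets $U\cap U'$, $U\cap V'$, $V\cap U'$, $V\cap V'$ are nonempty; otherwise they are compatible. A pants decomposition of $E$ is a countable collection $\Gamma$ of non-peripheral cuts such that: (1) any two cuts in $\Gamma$ are compatible; (2) every non-peripheral cut $\gamma\notin\Gamma$ crosses some cut of $\Gamma$; (3) every non-peripheral cut $\gamma\notin\Gamma$ crosses only finitely many cuts of $\Gamma$. Two cuts $\gamma_i,\gamma_j\in\Gamma$ are adjacent in $\Gamma$ if there is a non-peripheral cut crossing $\gamma_i$ and $\gamma_j$ and no other cut of $\Gamma$; the adjacency graph $A(\Gamma)$ has vertex set $\Gamma$ and edges between adjacent cuts. *)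

theory Defs
  imports "HOL-Analysis.Analysis"
begin

definition totally_disconnected_space :: "'a topology \<Rightarrow> bool" where
  "totally_disconnected_space X \<longleftrightarrow>
     (\<forall>S. connectedin X S \<longrightarrow> (\<forall>x\<in>S. \<forall>y\<in>S. x = y))"

definition stone_space :: "'a topology \<Rightarrow> bool" where
  "stone_space X \<longleftrightarrow> compact_space X \<and> Hausdorff_space X \<and> totally_disconnected_space X"

definition clopenin :: "'a topology \<Rightarrow> 'a set \<Rightarrow> bool" where
  "clopenin X U \<longleftrightarrow> openin X U \<and> closedin X U"

definition is_cut :: "'a topology \<Rightarrow> 'a set set \<Rightarrow> bool" where
  "is_cut X c \<longleftrightarrow> (\<exists>U V. c = {U, V} \<and> clopenin X U \<and> clopenin X V \<and>
      U \<inter> V = {} \<and> U \<union> V = topspace X \<and> U \<noteq> {} \<and> V \<noteq> {})"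

definition two_points :: "'a set \<Rightarrow> bool" where
  "two_points U \<longleftrightarrow> (\<exists>x y. x \<in> U \<and> y \<in> U \<and> x \<noteq> y)"

definition nonperipheral_cut :: "'a topology \<Rightarrow> 'a set set \<Rightarrow> bool" where
  "nonperipheral_cut X c \<longleftrightarrow> is_cut X c \<and> (\<forall>U\<in>c. two_points U)"

definition outermost_cut :: "'a topology \<Rightarrow> 'a set set \<Rightarrow> bool" where
  "outermost_cut X c \<longleftrightarrow> nonperipheral_cut X c \<and> (\<exists>U\<in>c. finite U \<and> card U = 2)"

definition crosses :: "'a set set \<Rightarrow> 'a set set \<Rightarrow> bool" where
  "crosses c d \<longleftrightarrow> (\<forall>U\<in>c. \<forall>U'\<in>d. U \<inter> U' \<noteq> {})"

definition compatible :: "'a set set \<Rightarrow> 'a set set \<Rightarrow> bool" where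
  "compatible c d \<longleftrightarrow> \<not> crosses c d"

definition pants_decomposition :: "'a topology \<Rightarrow> 'a set set set \<Rightarrow> bool" where
  "pants_decomposition X \<Gamma> \<longleftrightarrow>
     countable \<Gamma> \<and> (\<forall>c\<in>\<Gamma>. nonperipheral_cut X c) \<and>
     (\<forall>c\<in>\<Gamma>. \<forall>d\<in>\<Gamma>. compatible c d) \<and>
     (\<forall>g. nonperipheral_cut X g \<and> g \<notin> \<Gamma> \<longrightarrow> (\<exists>c\<in>\<Gamma>. crosses g c)) \<and>
     (\<forall>g. nonperipheral_cut X g \<and> g \<notin> \<Gamma> \<longrightarrow> finite {c\<in>\<Gamma>. crosses g c})"

definition adjacent_in :: "'a topology \<Rightarrow> 'a set set set \<Rightarrow> 'a set set \<Rightarrow> 'a set set \<Rightarrow> bool" where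
  "adjacent_in X \<Gamma> c d \<longleftrightarrow> c \<in> \<Gamma> \<and> d \<in> \<Gamma> \<and> c \<noteq> d \<and>
     (\<exists>g. nonperipheral_cut X g \<and> crosses g c \<and> crosses g d \<and>
          (\<forall>e\<in>\<Gamma>. crosses g e \<longrightarrow> e = c \<or> e = d))"

definition valence_le_two :: "'a topology \<Rightarrow> 'a set set set \<Rightarrow> 'a set set \<Rightarrow> bool" where
  "valence_le_two X \<Gamma> c \<longleftrightarrow>
     finite {d. adjacent_in X \<Gamma> c d} \<and> card {d. adjacent_in X \<Gamma> c d} \<le> 2"

end

theory Submission
  imports Defs
begin

text \<open>If one side \<open>A\<close> of \<open>\<gamma>\<close> has exactly two points, every other cut of \<open>\<Gamma>\<close> has a unique
  side disjoint from \<open>A\<close>, its far side. The far side of a neighbour of \<open>\<gamma>\<close> is maximal among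
  far sides, so far sides of distinct neighbours are disjoint. Given three neighbours, the cut
  with side \<open>A \<union> D1\<close>, \<open>D1\<close> the far side of the first, crosses no cut of \<open>\<Gamma>\<close> and so lies in \<open>\<Gamma>\<close>;
  maximality makes it the second neighbour, whose far side would then contain the third.

  If both sides have at least three points, the bound on the size of \<open>E\<close> gives one side
  \<open>B\<close> with four, and the sides split into nonempty clopen pieces
  \<open>A = A1 \<union> (A21 \<union> A22)\<close> and \<open>B = (B11 \<union> B12) \<union> (B21 \<union> B22)\<close>. Enumerate all clopen sets
  starting with \<open>A\<close>, \<open>A1 \<union> B1\<close>, \<open>A21 \<union> B11 \<union> B21\<close>; the atoms of the Boolean algebras
  generated by the initial segments of the enumeration form a tree of clopen sets whose cuts
  are a pants decomposition, and whose first three levels realise the splitting above. A cut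
  that is a union of level-3 atoms crosses only cuts of atoms of level at most two, which
  yields explicit witnesses making the cuts of \<open>A2\<close>, \<open>B1\<close> and \<open>B2\<close> three neighbours
  of \<open>\<gamma>\<close>.\<close>

lemma clopenin_topspace_diff: "clopenin X U \<Longrightarrow> clopenin X (topspace X - U)"
  by (auto simp: clopenin_def)

lemma clopenin_Un: "clopenin X U \<Longrightarrow> clopenin X V \<Longrightarrow> clopenin X (U \<union> V)"
  by (auto simp: clopenin_def)

lemma clopenin_Int: "clopenin X U \<Longrightarrow> clopenin X V \<Longrightarrow> clopenin X (U \<inter> V)"
  by (auto simp: clopenin_def)

lemma clopenin_Diff: "clopenin X U \<Longrightarrow> clopenin X V \<Longrightarrow> clopenin X (U - V)"
  by (auto simp: clopenin_def)

lemma clopenin_subset: "clopenin X U \<Longrightarrow> U \<subseteq> topspace X"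
  by (auto simp: clopenin_def openin_subset)

lemma stone_space_separating_clopen:
  assumes "stone_space X" "x \<in> topspace X" "y \<in> topspace X" "x \<noteq> y"
  obtains T where "clopenin X T" "x \<in> T" "y \<notin> T"
proof -
  have compact: "compact_space X" and "Hausdorff_space X" "totally_disconnected_space X"
    using assms(1) by (auto simp: stone_space_def)
  let ?C = "quasi_component_of_set X x"
  have "compactin X ?C"
    by (rule closedin_compact_space[OF compact closedin_quasi_component_of])
  moreover have "?C \<in> quasi_components_of X"
    using assms(2) by (simp add: quasi_component_in_quasi_components_of)
  ultimately have "?C \<in> connected_components_of X"
    using compact_quasi_eq_connected_components_of[OF compact_imp_locally_compact_space[OF compact]]
      \<open>Hausdorff_space X\<close> by blast
  then have "connectedin X ?C" "x \<in> ?C"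
    using assms(2) connectedin_connected_components_of by auto
  then have "\<not> quasi_component_of X x y"
    using \<open>totally_disconnected_space X\<close> assms(4)
    unfolding totally_disconnected_space_def by (metis mem_Collect_eq)
  then obtain T where "closedin X T" "openin X T" "x \<in> T \<longleftrightarrow> y \<notin> T"
    using assms(2,3) unfolding quasi_component_of_def by blast
  then have "clopenin X T" "clopenin X (topspace X - T)"
    by (auto simp: clopenin_def)
  with \<open>x \<in> T \<longleftrightarrow> y \<notin> T\<close> assms(2) show thesis
    using that by (cases "x \<in> T") auto
qed

lemma nonperipheral_cut_side:
  assumes "nonperipheral_cut X c" "U \<in> c"
  shows "c = {U, topspace X - U}" "clopenin X U" "U \<subseteq> topspace X"
    "two_points U" "two_points (topspace X - U)"
proof -
  obtain P Q where PQ: "c = {P, Q}" "clopenin X P" "clopenin X Q" "P \<union> Q = topspace X"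
    "P \<inter> Q = {}"
    using assms(1) unfolding nonperipheral_cut_def is_cut_def by blast
  then have "Q = topspace X - P" "P = topspace X - Q"
    by blast+
  moreover have "\<forall>V\<in>c. two_points V"
    using assms(1) by (simp add: nonperipheral_cut_def)
  ultimately show "c = {U, topspace X - U}" "clopenin X U" "U \<subseteq> topspace X"
    "two_points U" "two_points (topspace X - U)"
    using PQ assms(2) by auto
qed

lemma nonperipheral_cut_obtain_side:
  assumes "nonperipheral_cut X c"
  obtains U where "U \<in> c"
  using assms unfolding nonperipheral_cut_def is_cut_def by blast

lemma nonperipheral_cutI:
  assumes "clopenin X U" "two_points U" "two_points (topspace X - U)"
  shows "nonperipheral_cut X {U, topspace X - U}"
proof -
  have "U \<noteq> {}" "topspace X - U \<noteq> {}"
    using assms(2,3) by (auto simp: two_points_def)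
  then show ?thesis
    using assms clopenin_topspace_diff[OF assms(1)] clopenin_subset[OF assms(1)]
    unfolding nonperipheral_cut_def is_cut_def by blast
qed

lemma crosses_doubleton:
  "crosses {P, Q} {R, S} \<longleftrightarrow> P \<inter> R \<noteq> {} \<and> P \<inter> S \<noteq> {} \<and> Q \<inter> R \<noteq> {} \<and> Q \<inter> S \<noteq> {}"
  unfolding crosses_def by auto

lemma two_points_subset_card_2_eq:
  assumes "finite A" "card A = 2" "U \<subseteq> A" "two_points U"
  shows "U = A"
proof -
  obtain x y where "x \<in> U" "y \<in> U" "x \<noteq> y"
    using assms(4) by (auto simp: two_points_def)
  then have "2 \<le> card U"
    using card_mono[OF finite_subset[OF assms(3,1)], of "{x, y}"] by auto
  then show ?thesis
    using card_subset_eq[OF assms(1,3)] card_mono[OF assms(1,3)] assms(2) by simp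
qed

lemma finite_card_le_2I:
  assumes "\<And>a b c. a \<in> S \<Longrightarrow> b \<in> S \<Longrightarrow> c \<in> S \<Longrightarrow> a \<noteq> b \<Longrightarrow> a \<noteq> c \<Longrightarrow> b \<noteq> c \<Longrightarrow> False"
  shows "finite S \<and> card S \<le> 2"
proof -
  obtain a b where ab: "S \<subseteq> {a, b}"
  proof (cases "S = {}")
    case False
    then obtain a where "a \<in> S"
      by blast
    show thesis
    proof (cases "S \<subseteq> {a}")
      case False
      then obtain b where "b \<in> S" "b \<noteq> a"
        by blast
      then show thesis
        using that assms \<open>a \<in> S\<close> by blast
    qed (use that in blast)
  qed (use that in blast)
  have "card {a, b} \<le> 2"
    by (simp add: card_insert_if)
  then show ?thesis
    using card_mono[OF _ ab] finite_subset[OF ab] by simp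
qed

locale pants_with_outermost_cut =
  fixes X :: "'a topology" and \<Gamma> :: "'a set set set" and \<gamma> :: "'a set set" and A :: "'a set"
  assumes pants: "pants_decomposition X \<Gamma>" and \<gamma>_in: "\<gamma> \<in> \<Gamma>"
    and A_side: "A \<in> \<gamma>" and finite_A: "finite A" and card_A: "card A = 2"
begin

abbreviation "E \<equiv> topspace X"

lemma nonperipheral: "c \<in> \<Gamma> \<Longrightarrow> nonperipheral_cut X c"
  using pants by (simp add: pants_decomposition_def)

lemma not_crosses: "c \<in> \<Gamma> \<Longrightarrow> d \<in> \<Gamma> \<Longrightarrow> \<not> crosses c d"
  using pants by (simp add: pants_decomposition_def compatible_def)

lemmas side = nonperipheral_cut_side[OF nonperipheral]

lemma \<gamma>_eq: "\<gamma> = {A, E - A}"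
  using side[OF \<gamma>_in A_side] by blast

lemma A_subset: "A \<subseteq> E"
  using side[OF \<gamma>_in A_side] by blast

lemma A_nonempty: "A \<noteq> {}"
  using finite_A card_A by auto

text \<open>This is where \<open>card A = 2\<close> enters: a cut compatible with \<open>\<gamma>\<close> has a side inside \<open>A\<close> or
  a side avoiding \<open>A\<close>, and a side inside \<open>A\<close> with two points is \<open>A\<close> itself.\<close>
lemma far_side_exists:
  assumes "d \<in> \<Gamma>" "d \<noteq> \<gamma>"
  obtains D where "D \<in> d" "D \<inter> A = {}"
proof -
  obtain U U' where U: "U \<in> d" "U' \<in> \<gamma>" "U \<inter> U' = {}"
    using not_crosses[OF assms(1) \<gamma>_in] unfolding crosses_def by blast
  have d_eq: "d = {U, E - U}" and "U \<subseteq> E" "two_points U"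
    using side[OF assms(1) U(1)] by auto
  show thesis
  proof (cases "U' = A")
    case False
    then have "U \<subseteq> A"
      using U \<gamma>_eq \<open>U \<subseteq> E\<close> by auto
    then have "d = \<gamma>"
      using two_points_subset_card_2_eq[OF finite_A card_A _ \<open>two_points U\<close>] d_eq \<gamma>_eq by simp
    with assms(2) show thesis
      by simp
  qed (use U that in blast)
qed

lemma far_side_unique:
  assumes "d \<in> \<Gamma>" "D \<in> d" "D \<inter> A = {}" "D' \<in> d" "D' \<inter> A = {}"
  shows "D = D'"
proof -
  have "D' = D \<or> D' = E - D"
    using side(1)[OF assms(1,2)] assms(4) by blast
  moreover have "(E - D) \<inter> A \<noteq> {}"
    using assms(3) A_subset A_nonempty by blast
  ultimately show ?thesis
    using assms(5) by blast
qed

lemma far_sides_nested_or_disjoint: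
  assumes "c \<in> \<Gamma>" "D \<in> c" "D \<inter> A = {}" "d \<in> \<Gamma>" "D' \<in> d" "D' \<inter> A = {}"
  shows "D \<inter> D' = {} \<or> D \<subseteq> D' \<or> D' \<subseteq> D"
proof -
  obtain U U' where "U \<in> c" "U' \<in> d" "U \<inter> U' = {}"
    using not_crosses[OF assms(1,4)] unfolding crosses_def by blast
  moreover have "c = {D, E - D}" "d = {D', E - D'}" "D \<subseteq> E" "D' \<subseteq> E"
    using side[OF assms(1,2)] side[OF assms(4,5)] by auto
  moreover have "(E - D) \<inter> (E - D') \<noteq> {}"
    using assms(3,6) A_subset A_nonempty by blast
  ultimately show ?thesis
    by auto
qed

lemma adjacent_far_side_maximal:
  assumes "adjacent_in X \<Gamma> \<gamma> d" "D \<in> d" "D \<inter> A = {}"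
    and "e \<in> \<Gamma>" "e \<noteq> \<gamma>" "D' \<in> e" "D' \<inter> A = {}" "D \<subseteq> D'"
  shows "e = d"
proof -
  obtain g where g: "crosses g \<gamma>" "crosses g d" "\<forall>e\<in>\<Gamma>. crosses g e \<longrightarrow> e = \<gamma> \<or> e = d"
    using assms(1) unfolding adjacent_in_def by blast
  have e_eq: "e = {D', E - D'}"
    using side[OF assms(4,6)] by blast
  have "crosses g e"
    unfolding crosses_def
  proof (intro ballI)
    fix W U assume "W \<in> g" "U \<in> e"
    moreover have "W \<inter> D \<noteq> {}" "W \<inter> A \<noteq> {}"
      using g(1,2) \<open>W \<in> g\<close> assms(2) A_side unfolding crosses_def by blast+
    ultimately show "W \<inter> U \<noteq> {}"
      using e_eq assms(7,8) A_subset by blast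
  qed
  then show ?thesis
    using g(3) assms(4,5) by blast
qed

lemma adjacent_far_sides_disjoint:
  assumes "adjacent_in X \<Gamma> \<gamma> d1" "adjacent_in X \<Gamma> \<gamma> d2" "d1 \<noteq> d2"
    and "D1 \<in> d1" "D1 \<inter> A = {}" "D2 \<in> d2" "D2 \<inter> A = {}"
  shows "D1 \<inter> D2 = {}"
proof -
  have "d1 \<in> \<Gamma>" "d1 \<noteq> \<gamma>" "d2 \<in> \<Gamma>" "d2 \<noteq> \<gamma>"
    using assms(1,2) by (auto simp: adjacent_in_def)
  then show ?thesis
    using far_sides_nested_or_disjoint[of d1 D1 d2 D2] assms
      adjacent_far_side_maximal[OF assms(1,4,5), of d2 D2]
      adjacent_far_side_maximal[OF assms(2,6,7), of d1 D1] by blast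
qed

lemma not_crosses_union_far_side:
  assumes "adjacent_in X \<Gamma> \<gamma> d" "D \<in> d" "D \<inter> A = {}" "c \<in> \<Gamma>"
  shows "\<not> crosses {A \<union> D, E - (A \<union> D)} c"
proof
  assume cross: "crosses {A \<union> D, E - (A \<union> D)} c"
  have "A \<notin> c"
    using cross unfolding crosses_def by auto
  then have "c \<noteq> \<gamma>"
    using A_side by blast
  then obtain D' where D': "D' \<in> c" "D' \<inter> A = {}"
    using far_side_exists[OF assms(4)] by blast
  have "(A \<union> D) \<inter> D' \<noteq> {}" "(E - (A \<union> D)) \<inter> D' \<noteq> {}"
    using cross D'(1) unfolding crosses_def by auto
  then have "D \<inter> D' \<noteq> {}" "\<not> D' \<subseteq> D"
    using D'(2) by blast+
  moreover have "d \<in> \<Gamma>"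
    using assms(1) by (simp add: adjacent_in_def)
  ultimately have "D \<subseteq> D'"
    using far_sides_nested_or_disjoint[OF _ assms(2,3) assms(4) D'] by blast
  then have "c = d"
    using adjacent_far_side_maximal[OF assms(1-4) \<open>c \<noteq> \<gamma>\<close> D'] by blast
  then have "D' = D"
    using far_side_unique[OF \<open>d \<in> \<Gamma>\<close> _ D'(2) assms(2,3)] D'(1) by blast
  with \<open>\<not> D' \<subseteq> D\<close> show False
    by blast
qed

lemma union_far_side_cut_in_\<Gamma>:
  assumes "adjacent_in X \<Gamma> \<gamma> d" "D \<in> d" "D \<inter> A = {}" "two_points (E - (A \<union> D))"
  shows "{A \<union> D, E - (A \<union> D)} \<in> \<Gamma>"
proof -
  have "d \<in> \<Gamma>"
    using assms(1) by (simp add: adjacent_in_def)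
  have "nonperipheral_cut X {A \<union> D, E - (A \<union> D)}"
  proof (rule nonperipheral_cutI)
    show "clopenin X (A \<union> D)"
      by (rule clopenin_Un[OF side(2)[OF \<gamma>_in A_side] side(2)[OF \<open>d \<in> \<Gamma>\<close> assms(2)]])
    show "two_points (A \<union> D)"
      using side(4)[OF \<gamma>_in A_side] unfolding two_points_def by blast
  qed (rule assms(4))
  with not_crosses_union_far_side[OF assms(1-3)] show ?thesis
    using pants unfolding pants_decomposition_def by blast
qed

lemma no_three_adjacent:
  assumes adj: "adjacent_in X \<Gamma> \<gamma> d1" "adjacent_in X \<Gamma> \<gamma> d2" "adjacent_in X \<Gamma> \<gamma> d3"
    and distinct: "d1 \<noteq> d2" "d1 \<noteq> d3" "d2 \<noteq> d3"
  shows False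
proof -
  have d: "d1 \<in> \<Gamma>" "d1 \<noteq> \<gamma>" "d2 \<in> \<Gamma>" "d2 \<noteq> \<gamma>" "d3 \<in> \<Gamma>" "d3 \<noteq> \<gamma>"
    using adj by (auto simp: adjacent_in_def)
  obtain D1 where D1: "D1 \<in> d1" "D1 \<inter> A = {}"
    using far_side_exists[OF d(1,2)] by blast
  obtain D2 where D2: "D2 \<in> d2" "D2 \<inter> A = {}"
    using far_side_exists[OF d(3,4)] by blast
  obtain D3 where D3: "D3 \<in> d3" "D3 \<inter> A = {}"
    using far_side_exists[OF d(5,6)] by blast
  have disjoint: "D1 \<inter> D2 = {}" "D1 \<inter> D3 = {}" "D2 \<inter> D3 = {}"
    using adjacent_far_sides_disjoint[OF adj(1,2) distinct(1) D1 D2]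
      adjacent_far_sides_disjoint[OF adj(1,3) distinct(2) D1 D3]
      adjacent_far_sides_disjoint[OF adj(2,3) distinct(3) D2 D3] by blast+
  have "D1 \<noteq> {}" "D2 \<subseteq> E" "two_points D2" "D3 \<subseteq> E" "D3 \<noteq> {}"
    using side[OF d(1) D1(1)] side[OF d(3) D2(1)] side[OF d(5) D3(1)]
    by (auto simp: two_points_def)
  define H where "H = A \<union> D1"
  have D2_D3: "D2 \<subseteq> E - H" "D3 \<subseteq> E - H"
    using disjoint D2(2) D3(2) \<open>D2 \<subseteq> E\<close> \<open>D3 \<subseteq> E\<close> unfolding H_def by blast+
  then have "two_points (E - H)"
    using \<open>two_points D2\<close> unfolding two_points_def by blast
  then have "{H, E - H} \<in> \<Gamma>"
    unfolding H_def by (rule union_far_side_cut_in_\<Gamma>[OF adj(1) D1])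
  moreover have "{H, E - H} \<noteq> \<gamma>"
    using \<gamma>_eq D1(2) \<open>D1 \<noteq> {}\<close> A_nonempty A_subset unfolding H_def
    by (auto simp: doubleton_eq_iff)
  moreover have "(E - H) \<inter> A = {}"
    unfolding H_def by blast
  ultimately have "{H, E - H} = d2"
    using adjacent_far_side_maximal[OF adj(2) D2] D2_D3(1) by blast
  then have "E - H = D2"
    using far_side_unique[OF d(3) _ \<open>(E - H) \<inter> A = {}\<close> D2] by blast
  with D2_D3(2) disjoint(3) \<open>D3 \<noteq> {}\<close> show False
    by blast
qed

lemma valence_of_\<gamma>: "valence_le_two X \<Gamma> \<gamma>"
  unfolding valence_le_two_def by (rule finite_card_le_2I) (use no_three_adjacent in blast)

end

lemma valence_le_two_if_outermost:
  assumes "pants_decomposition X \<Gamma>" "\<gamma> \<in> \<Gamma>" "outermost_cut X \<gamma>"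
  shows "valence_le_two X \<Gamma> \<gamma>"
proof -
  obtain A where "A \<in> \<gamma>" "finite A" "card A = 2"
    using assms(3) unfolding outermost_cut_def by blast
  with assms(1,2) interpret pants_with_outermost_cut X \<Gamma> \<gamma> A
    by unfold_locales
  show ?thesis
    by (rule valence_of_\<gamma>)
qed

definition cuts_of :: "'a topology \<Rightarrow> 'a set set \<Rightarrow> 'a set set set" where
  "cuts_of X \<N> = (\<lambda>N. {N, topspace X - N}) ` {N\<in>\<N>. two_points N \<and> two_points (topspace X - N)}"

locale clopen_tree =
  fixes X :: "'a topology" and \<N> :: "'a set set"
  assumes countable: "countable \<N>"
    and clopen: "N \<in> \<N> \<Longrightarrow> clopenin X N"
    and laminar: "N \<in> \<N> \<Longrightarrow> M \<in> \<N> \<Longrightarrow> N \<subseteq> M \<or> M \<subseteq> N \<or> N \<inter> M = {}"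
    and root: "topspace X \<in> \<N>"
    and children: "N \<in> \<N> \<Longrightarrow> two_points N \<Longrightarrow>
        \<exists>N1\<in>\<N>. \<exists>N2\<in>\<N>. N1 \<inter> N2 = {} \<and> N1 \<union> N2 = N \<and> N1 \<noteq> {} \<and> N2 \<noteq> {}"
    and finite_splitting: "clopenin X T \<Longrightarrow> finite {N\<in>\<N>. N \<inter> T \<noteq> {} \<and> N - T \<noteq> {}}"
begin

abbreviation "E \<equiv> topspace X"

lemma member_subset: "N \<in> \<N> \<Longrightarrow> N \<subseteq> E"
  using clopen clopenin_subset by blast

lemma cuts_of_iff: "c \<in> cuts_of X \<N> \<longleftrightarrow>
    (\<exists>N\<in>\<N>. two_points N \<and> two_points (E - N) \<and> c = {N, E - N})"
  unfolding cuts_of_def by blast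

lemma cuts_ofI:
  assumes "nonperipheral_cut X g" "G \<in> g" "P \<in> \<N>" "G = P \<or> G = E - P"
  shows "g \<in> cuts_of X \<N>"
proof -
  have g: "g = {G, E - G}" "G \<subseteq> E" "two_points G" "two_points (E - G)"
    using nonperipheral_cut_side[OF assms(1,2)] by auto
  have "E - (E - P) = P"
    using member_subset[OF assms(3)] by blast
  with assms(4) g have "two_points P \<and> two_points (E - P) \<and> g = {P, E - P}"
    by auto
  with assms(3) show ?thesis
    unfolding cuts_of_iff by blast
qed

lemma nonperipheral_cuts_of: "c \<in> cuts_of X \<N> \<Longrightarrow> nonperipheral_cut X c"
  unfolding cuts_of_iff using nonperipheral_cutI clopen by blast

lemma compatible_cuts_of:
  assumes "c \<in> cuts_of X \<N>" "d \<in> cuts_of X \<N>"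
  shows "compatible c d"
proof -
  obtain N M where NM: "N \<in> \<N>" "c = {N, E - N}" "M \<in> \<N>" "d = {M, E - M}"
    using assms unfolding cuts_of_iff by blast
  have "N \<inter> (E - M) = {} \<or> (E - N) \<inter> M = {} \<or> N \<inter> M = {}"
    using laminar[OF NM(1,3)] by blast
  then show ?thesis
    unfolding compatible_def NM(2,4) crosses_doubleton by blast
qed

lemma finite_cuts_of_crossing:
  assumes "nonperipheral_cut X g"
  shows "finite {c \<in> cuts_of X \<N>. crosses g c}"
proof -
  obtain G where "G \<in> g"
    using assms by (rule nonperipheral_cut_obtain_side)
  note g = nonperipheral_cut_side[OF assms this]
  have "{c \<in> cuts_of X \<N>. crosses g c} \<subseteq>
      (\<lambda>N. {N, E - N}) ` {N\<in>\<N>. N \<inter> G \<noteq> {} \<and> N - G \<noteq> {}}"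
  proof
    fix c assume "c \<in> {c \<in> cuts_of X \<N>. crosses g c}"
    then obtain N where "N \<in> \<N>" "c = {N, E - N}" "crosses {G, E - G} {N, E - N}"
      using g(1) unfolding cuts_of_iff by auto
    then show "c \<in> (\<lambda>N. {N, E - N}) ` {N\<in>\<N>. N \<inter> G \<noteq> {} \<and> N - G \<noteq> {}}"
      unfolding crosses_doubleton by blast
  qed
  then show ?thesis
    using finite_splitting[OF g(2)] finite_subset by blast
qed

text \<open>Take a minimal member of \<open>\<N>\<close> split by \<open>G\<close>: there is one, since \<open>E\<close> is split and only
  finitely many members are.\<close>
lemma splitting_member_with_children:
  assumes "clopenin X G" "G \<noteq> {}" "E - G \<noteq> {}"
  obtains N P Q where "N \<in> \<N>" "P \<in> \<N>" "Q \<in> \<N>" "P \<union> Q = N" "P \<inter> Q = {}"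
    "P \<noteq> {}" "Q \<noteq> {}" "P \<subseteq> G" "Q \<inter> G = {}"
proof -
  let ?S = "{N\<in>\<N>. N \<inter> G \<noteq> {} \<and> N - G \<noteq> {}}"
  have "E \<in> ?S"
    using root assms clopenin_subset by blast
  then obtain N where N: "N \<in> ?S" "\<forall>M\<in>?S. M \<subseteq> N \<longrightarrow> N = M"
    using finite_has_minimal[OF finite_splitting[OF assms(1)]] by blast
  then have "two_points N"
    unfolding two_points_def by blast
  then obtain N1 N2 where N12: "N1 \<in> \<N>" "N2 \<in> \<N>" "N1 \<inter> N2 = {}" "N1 \<union> N2 = N"
    "N1 \<noteq> {}" "N2 \<noteq> {}"
    using children N(1) by blast
  have "N1 \<noteq> N" "N2 \<noteq> N"
    using N12 by blast+
  then have "N1 \<notin> ?S" "N2 \<notin> ?S"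
    using N(2) N12(4) by blast+
  then have "N1 \<subseteq> G \<or> N1 \<inter> G = {}" "N2 \<subseteq> G \<or> N2 \<inter> G = {}"
    using N12(1,2) by blast+
  moreover have "N \<inter> G \<noteq> {}" "N - G \<noteq> {}"
    using N(1) by blast+
  ultimately consider "N1 \<subseteq> G" "N2 \<inter> G = {}" | "N2 \<subseteq> G" "N1 \<inter> G = {}"
    using N12(4) by blast
  then show thesis
  proof cases
    case 1
    with that show thesis
      using N12 N(1) by blast
  next
    case 2
    with that[of N N2 N1] show thesis
      using N12 N(1) by blast
  qed
qed

lemma uncrossed_side_nested:
  assumes uncrossed: "\<forall>c\<in>cuts_of X \<N>. \<not> crosses {G, E - G} c" and "G \<subseteq> E"
    and "N \<in> \<N>" "two_points N" "G \<inter> N \<noteq> {}" "N - G \<noteq> {}"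
  shows "G \<subseteq> N \<or> E - G \<subseteq> N"
proof (cases "two_points (E - N)")
  case True
  with assms(3,4) have "{N, E - N} \<in> cuts_of X \<N>"
    unfolding cuts_of_iff by blast
  with uncrossed have "\<not> crosses {G, E - G} {N, E - N}"
    by blast
  moreover have "(E - G) \<inter> N \<noteq> {}"
    using assms(6) member_subset[OF assms(3)] by blast
  ultimately have "G \<inter> (E - N) = {} \<or> (E - G) \<inter> (E - N) = {}"
    using assms(5) unfolding crosses_doubleton by blast
  then show ?thesis
    using \<open>G \<subseteq> E\<close> by blast
next
  case False
  then obtain p where p: "E - N \<subseteq> {p}"
    unfolding two_points_def by blast
  show ?thesis
  proof (cases "p \<in> G")
    case True
    then show ?thesis
      using p by blast
  next
    case False
    then show ?thesis
      using p \<open>G \<subseteq> E\<close> by blast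
  qed
qed

lemma side_eq_child_or_complement:
  assumes uncrossed: "\<forall>c\<in>cuts_of X \<N>. \<not> crosses {G, E - G} c" and "G \<subseteq> E"
    and N: "N \<in> \<N>" "P \<union> Q = N" "P \<inter> Q = {}" "P \<noteq> {}" "Q \<noteq> {}" "P \<subseteq> G" "Q \<inter> G = {}"
  shows "G = P \<or> G = E - Q"
proof -
  have "N \<subseteq> E"
    by (rule member_subset[OF N(1)])
  have "two_points N"
    using N(2-5) unfolding two_points_def by blast
  moreover have "G \<inter> N \<noteq> {}" "N - G \<noteq> {}"
    using N by blast+
  ultimately have "G \<subseteq> N \<or> E - G \<subseteq> N"
    by (rule uncrossed_side_nested[OF uncrossed \<open>G \<subseteq> E\<close> N(1)])
  then show ?thesis
  proof
    assume "G \<subseteq> N"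
    then have "G = P"
      using N(2,6,7) by blast
    then show ?thesis ..
  next
    assume "E - G \<subseteq> N"
    then have "E - G = Q"
      using N(2,3,6,7) \<open>N \<subseteq> E\<close> by blast
    then have "G = E - Q"
      using \<open>G \<subseteq> E\<close> by blast
    then show ?thesis ..
  qed
qed

lemma uncrossed_in_cuts_of:
  assumes "nonperipheral_cut X g" "\<forall>c\<in>cuts_of X \<N>. \<not> crosses g c"
  shows "g \<in> cuts_of X \<N>"
proof -
  obtain G where "G \<in> g"
    using assms(1) by (rule nonperipheral_cut_obtain_side)
  note g = nonperipheral_cut_side[OF assms(1) this]
  have "G \<noteq> {}" "E - G \<noteq> {}"
    using g(4,5) unfolding two_points_def by blast+
  then obtain N P Q where PQ: "N \<in> \<N>" "P \<in> \<N>" "Q \<in> \<N>" "P \<union> Q = N" "P \<inter> Q = {}"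
    "P \<noteq> {}" "Q \<noteq> {}" "P \<subseteq> G" "Q \<inter> G = {}"
    using splitting_member_with_children[OF g(2)] by blast
  have "G = P \<or> G = E - Q"
    using side_eq_child_or_complement[OF _ g(3) PQ(1,4-9)] assms(2) g(1) by simp
  then show ?thesis
    using cuts_ofI[OF assms(1) \<open>G \<in> g\<close>] PQ(2,3) by blast
qed

lemma pants_decomposition_cuts_of: "pants_decomposition X (cuts_of X \<N>)"
proof -
  have "countable (cuts_of X \<N>)"
    unfolding cuts_of_def by (rule countable_image, rule countable_subset[OF _ countable]) blast
  moreover have "\<exists>c\<in>cuts_of X \<N>. crosses g c"
    if "nonperipheral_cut X g" "g \<notin> cuts_of X \<N>" for g
    using uncrossed_in_cuts_of[OF that(1)] that(2) by blast
  ultimately show ?thesis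
    unfolding pants_decomposition_def
    using nonperipheral_cuts_of compatible_cuts_of finite_cuts_of_crossing by blast
qed

end

text \<open>\<open>atom X C n x\<close> is the atom containing \<open>x\<close> of the Boolean algebra generated by
  \<open>C 0, \<dots>, C (n - 1)\<close>.\<close>
definition atom :: "'a topology \<Rightarrow> (nat \<Rightarrow> 'a set) \<Rightarrow> nat \<Rightarrow> 'a \<Rightarrow> 'a set" where
  "atom X C n x = {y \<in> topspace X. \<forall>i<n. y \<in> C i \<longleftrightarrow> x \<in> C i}"

definition atoms :: "'a topology \<Rightarrow> (nat \<Rightarrow> 'a set) \<Rightarrow> 'a set set" where
  "atoms X C = {atom X C n x | n x. x \<in> topspace X}"

definition atom_saturated :: "'a topology \<Rightarrow> (nat \<Rightarrow> 'a set) \<Rightarrow> nat \<Rightarrow> 'a set \<Rightarrow> bool" where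
  "atom_saturated X C n G \<longleftrightarrow> (\<forall>x\<in>topspace X. \<forall>y\<in>atom X C n x. y \<in> G \<longleftrightarrow> x \<in> G)"

lemma atom_0: "atom X C 0 x = topspace X"
  by (simp add: atom_def)

lemma atom_Suc: "atom X C (Suc n) x = atom X C n x \<inter> {y. y \<in> C n \<longleftrightarrow> x \<in> C n}"
  unfolding atom_def by (auto simp: less_Suc_eq)

lemma atom_subset: "atom X C n x \<subseteq> topspace X"
  by (auto simp: atom_def)

lemma atom_self: "x \<in> topspace X \<Longrightarrow> x \<in> atom X C n x"
  by (simp add: atom_def)

lemma atom_eq: "y \<in> atom X C n x \<Longrightarrow> atom X C n y = atom X C n x"
  unfolding atom_def by auto

lemma atom_antimono: "m \<le> n \<Longrightarrow> atom X C n x \<subseteq> atom X C m x"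
  unfolding atom_def by auto

lemma clopenin_atom:
  assumes "\<And>i. clopenin X (C i)"
  shows "clopenin X (atom X C n x)"
proof (induction n)
  case (Suc n)
  have "atom X C (Suc n) x = atom X C n x \<inter> (if x \<in> C n then C n else topspace X - C n)"
    unfolding atom_Suc using atom_subset[of X C n x] by auto
  then show ?case
    using clopenin_Int[OF Suc.IH assms] clopenin_Int[OF Suc.IH clopenin_topspace_diff[OF assms]]
    by simp
qed (simp add: atom_0 clopenin_def)

lemma atoms_laminar:
  assumes "N \<in> atoms X C" "M \<in> atoms X C"
  shows "N \<subseteq> M \<or> M \<subseteq> N \<or> N \<inter> M = {}"
proof (rule ccontr)
  assume "\<not> ?thesis"
  then obtain z where "z \<in> N" "z \<in> M" "\<not> N \<subseteq> M" "\<not> M \<subseteq> N"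
    by blast
  moreover obtain n x m y where "N = atom X C n x" "M = atom X C m y"
    using assms unfolding atoms_def by blast
  ultimately show False
    using atom_eq[of z X C n x] atom_eq[of z X C m y] atom_antimono[of m n X C z]
      atom_antimono[of n m X C z] by (metis nat_le_linear)
qed

lemma finite_atom_level: "finite {atom X C n x | x. x \<in> topspace X}"
proof -
  let ?atom_of = "\<lambda>I. {y \<in> topspace X. \<forall>i<n. y \<in> C i \<longleftrightarrow> i \<in> I}"
  have "{atom X C n x | x. x \<in> topspace X} \<subseteq> ?atom_of ` Pow {..<n}"
  proof
    fix N assume "N \<in> {atom X C n x | x. x \<in> topspace X}"
    then obtain x where "N = atom X C n x"
      by blast
    then have "N = ?atom_of {i. i < n \<and> x \<in> C i}"
      unfolding atom_def by auto
    then show "N \<in> ?atom_of ` Pow {..<n}"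
      by blast
  qed
  then show ?thesis
    by (rule finite_subset) simp
qed

lemma countable_atoms: "countable (atoms X C)"
proof -
  have "atoms X C = (\<Union>n. {atom X C n x | x. x \<in> topspace X})"
    unfolding atoms_def by blast
  then show ?thesis
    by (simp only:) (rule countable_UN, auto intro: countable_finite finite_atom_level)
qed

lemma atom_saturated_C: "i < n \<Longrightarrow> atom_saturated X C n (C i)"
  by (auto simp: atom_saturated_def atom_def)

lemma atom_saturated_topspace: "atom_saturated X C n (topspace X)"
  by (auto simp: atom_saturated_def atom_def)

lemma atom_saturated_Un:
  "atom_saturated X C n G \<Longrightarrow> atom_saturated X C n H \<Longrightarrow> atom_saturated X C n (G \<union> H)"
  by (auto simp: atom_saturated_def)

lemma atom_saturated_Int:
  "atom_saturated X C n G \<Longrightarrow> atom_saturated X C n H \<Longrightarrow> atom_saturated X C n (G \<inter> H)"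
  by (auto simp: atom_saturated_def)

lemma atom_saturated_Diff:
  "atom_saturated X C n G \<Longrightarrow> atom_saturated X C n H \<Longrightarrow> atom_saturated X C n (G - H)"
  by (auto simp: atom_saturated_def)

lemma splitting_atom_level:
  assumes "atom_saturated X C m G" "x \<in> topspace X"
    and "atom X C n x \<inter> G \<noteq> {}" "atom X C n x - G \<noteq> {}"
  shows "n < m"
proof (rule ccontr)
  assume "\<not> n < m"
  then have "atom X C n x \<subseteq> atom X C m x"
    by (simp add: atom_antimono)
  then have same_side: "y \<in> G \<longleftrightarrow> x \<in> G" if "y \<in> atom X C n x" for y
    using assms(1,2) that unfolding atom_saturated_def by blast
  obtain y z where "y \<in> atom X C n x" "y \<in> G" "z \<in> atom X C n x" "z \<notin> G"
    using assms(3,4) by blast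
  with same_side[of y] same_side[of z] show False
    by simp
qed

lemma finite_atoms_splitting:
  assumes "atom_saturated X C m G"
  shows "finite {N\<in>atoms X C. N \<inter> G \<noteq> {} \<and> N - G \<noteq> {}}"
proof (rule finite_subset)
  show "{N\<in>atoms X C. N \<inter> G \<noteq> {} \<and> N - G \<noteq> {}} \<subseteq>
      (\<Union>n<m. {atom X C n x | x. x \<in> topspace X})"
  proof
    fix N assume N: "N \<in> {N\<in>atoms X C. N \<inter> G \<noteq> {} \<and> N - G \<noteq> {}}"
    then obtain n x where "N = atom X C n x" "x \<in> topspace X"
      unfolding atoms_def by blast
    moreover have "n < m"
      using splitting_atom_level[OF assms] N calculation by blast
    ultimately show "N \<in> (\<Union>n<m. {atom X C n x | x. x \<in> topspace X})"
      by blast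
  qed
qed (simp add: finite_atom_level)

lemma exists_level_refining_atom:
  assumes "n \<le> m" "atom X C m x \<noteq> atom X C n x"
  shows "\<exists>k. atom X C k x = atom X C n x \<and> atom X C (Suc k) x \<noteq> atom X C n x"
  using assms
proof (induction m)
  case (Suc m)
  show ?case
  proof (cases "atom X C m x = atom X C n x")
    case False
    with Suc.prems have "n \<le> m"
      by (metis le_SucE)
    then show ?thesis
      using False by (rule Suc.IH)
  qed (use Suc.prems in blast)
qed simp

lemma atom_Suc_children:
  assumes "x \<in> topspace X" "atom X C k x = N" "atom X C (Suc k) x \<noteq> N"
  shows "\<exists>N1\<in>atoms X C. \<exists>N2\<in>atoms X C. N1 \<inter> N2 = {} \<and> N1 \<union> N2 = N \<and> N1 \<noteq> {} \<and> N2 \<noteq> {}"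
proof -
  obtain w where w: "w \<in> N" "w \<in> C k \<longleftrightarrow> x \<notin> C k"
    using assms(2,3) unfolding atom_Suc by blast
  then have atom_k_w: "atom X C k w = N"
    using atom_eq assms(2) by metis
  have "w \<in> topspace X"
    using w(1) assms(2) atom_subset[of X C k x] by blast
  then have "atom X C (Suc k) x \<in> atoms X C" "atom X C (Suc k) w \<in> atoms X C"
    using assms(1) unfolding atoms_def by blast+
  moreover have "x \<in> atom X C (Suc k) x" "w \<in> atom X C (Suc k) w"
    using atom_self assms(1) \<open>w \<in> topspace X\<close> by metis+
  moreover have "atom X C (Suc k) x \<inter> atom X C (Suc k) w = {}"
    "atom X C (Suc k) x \<union> atom X C (Suc k) w = N"
    unfolding atom_Suc assms(2) atom_k_w using w(2) by blast+
  ultimately show ?thesis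
    by blast
qed

lemma atoms_children:
  assumes separating: "\<And>y z. y \<in> topspace X \<Longrightarrow> z \<in> topspace X \<Longrightarrow> y \<noteq> z \<Longrightarrow> \<exists>j. y \<in> C j \<and> z \<notin> C j"
    and "N \<in> atoms X C" "two_points N"
  shows "\<exists>N1\<in>atoms X C. \<exists>N2\<in>atoms X C. N1 \<inter> N2 = {} \<and> N1 \<union> N2 = N \<and> N1 \<noteq> {} \<and> N2 \<noteq> {}"
proof -
  obtain n x where N: "N = atom X C n x" "x \<in> topspace X"
    using assms(2) unfolding atoms_def by blast
  obtain y z where "y \<in> N" "z \<in> N" "y \<noteq> z"
    using assms(3) unfolding two_points_def by blast
  moreover have "N \<subseteq> topspace X"
    using N(1) atom_subset by simp
  ultimately obtain j where "y \<in> N" "z \<in> N" "y \<in> C j" "z \<notin> C j"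
    using separating by blast
  moreover have "j < Suc (max n j)"
    by simp
  ultimately have "y \<notin> atom X C (Suc (max n j)) x \<or> z \<notin> atom X C (Suc (max n j)) x"
    unfolding atom_def by blast
  then have "atom X C (Suc (max n j)) x \<noteq> atom X C n x"
    using \<open>y \<in> N\<close> \<open>z \<in> N\<close> N(1) by blast
  then have "\<exists>k. atom X C k x = atom X C n x \<and> atom X C (Suc k) x \<noteq> atom X C n x"
    by (rule exists_level_refining_atom[rotated]) simp
  then obtain k where "atom X C k x = N" "atom X C (Suc k) x \<noteq> N"
    unfolding N(1) by blast
  then show ?thesis
    by (rule atom_Suc_children[OF N(2)])
qed

lemma atoms_clopen_tree:
  assumes stone: "stone_space X" and "topspace X \<noteq> {}"
    and clopen: "\<And>i. clopenin X (C i)" and enumerating: "\<And>T. clopenin X T \<Longrightarrow> \<exists>m. C m = T"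
  shows "clopen_tree X (atoms X C)"
proof
  show "countable (atoms X C)"
    by (rule countable_atoms)
  show "clopenin X N" if "N \<in> atoms X C" for N
    using that clopenin_atom[where C = C, OF clopen] unfolding atoms_def by blast
  show "N \<subseteq> M \<or> M \<subseteq> N \<or> N \<inter> M = {}" if "N \<in> atoms X C" "M \<in> atoms X C" for N M
    using atoms_laminar[OF that] .
  show "topspace X \<in> atoms X C"
  proof -
    obtain x where "x \<in> topspace X"
      using assms(2) by blast
    moreover have "topspace X = atom X C 0 x"
      by (simp add: atom_0)
    ultimately show ?thesis
      unfolding atoms_def by blast
  qed
  show "\<exists>N1\<in>atoms X C. \<exists>N2\<in>atoms X C. N1 \<inter> N2 = {} \<and> N1 \<union> N2 = N \<and> N1 \<noteq> {} \<and> N2 \<noteq> {}"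
    if "N \<in> atoms X C" "two_points N" for N
  proof (rule atoms_children[OF _ that])
    fix y z assume "y \<in> topspace X" "z \<in> topspace X" "y \<noteq> z"
    then obtain T where T: "clopenin X T" "y \<in> T" "z \<notin> T"
      by (rule stone_space_separating_clopen[OF stone])
    moreover obtain m where "C m = T"
      using enumerating[OF T(1)] by blast
    ultimately show "\<exists>j. y \<in> C j \<and> z \<notin> C j"
      by blast
  qed
  show "finite {N \<in> atoms X C. N \<inter> T \<noteq> {} \<and> N - T \<noteq> {}}" if T: "clopenin X T" for T
  proof -
    obtain m where "C m = T"
      using enumerating[OF T] by blast
    with finite_atoms_splitting[OF atom_saturated_C[OF lessI, where X = X and C = C and i = m]]
    show ?thesis
      by simp
  qed
qed

lemma countable_clopenin:
  assumes "compact_space X" "second_countable X"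
  shows "countable {T. clopenin X T}"
proof -
  obtain \<B> where \<B>: "countable \<B>" "\<forall>V\<in>\<B>. openin X V"
    "\<forall>U x. openin X U \<and> x \<in> U \<longrightarrow> (\<exists>V\<in>\<B>. x \<in> V \<and> V \<subseteq> U)"
    using assms(2) unfolding second_countable_def by blast
  have "{T. clopenin X T} \<subseteq> Union ` {\<F>. finite \<F> \<and> \<F> \<subseteq> \<B>}"
  proof
    fix T assume "T \<in> {T. clopenin X T}"
    then have T: "openin X T" "closedin X T"
      by (auto simp: clopenin_def)
    have "compactin X T"
      by (rule closedin_compact_space[OF assms(1) T(2)])
    moreover have "T \<subseteq> \<Union>{V\<in>\<B>. V \<subseteq> T}"
      using \<B>(3) T(1) by blast
    moreover have "\<forall>U\<in>{V\<in>\<B>. V \<subseteq> T}. openin X U"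
      using \<B>(2) by blast
    ultimately have "\<exists>\<F>. finite \<F> \<and> \<F> \<subseteq> {V\<in>\<B>. V \<subseteq> T} \<and> T \<subseteq> \<Union>\<F>"
      unfolding compactin_def by blast
    then obtain \<F> where \<F>: "finite \<F>" "\<F> \<subseteq> {V\<in>\<B>. V \<subseteq> T}" "T \<subseteq> \<Union>\<F>"
      by blast
    then have "T = \<Union>\<F>"
      by blast
    then show "T \<in> Union ` {\<F>. finite \<F> \<and> \<F> \<subseteq> \<B>}"
      using \<F> by blast
  qed
  moreover have "countable {\<F>. finite \<F> \<and> \<F> \<subseteq> \<B>}"
    using countable_Collect_finite_subset[OF \<B>(1)] by simp
  ultimately show ?thesis
    by (meson countable_image countable_subset)
qed

lemma clopen_enumeration:
  assumes "compact_space X" "second_countable X" "\<forall>T\<in>set Ts. clopenin X T"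
  obtains C where "\<forall>i<length Ts. C i = Ts ! i" "\<forall>i. clopenin X (C i)"
    "\<forall>T. clopenin X T \<longrightarrow> (\<exists>m. C m = T)"
proof -
  let ?K = "{T. clopenin X T}"
  have "?K \<noteq> {}"
    by (auto simp: clopenin_def)
  define C where "C i = (if i < length Ts then Ts ! i else from_nat_into ?K (i - length Ts))" for i
  have "\<exists>m. C m = T" if T: "clopenin X T" for T
  proof -
    obtain n where "from_nat_into ?K n = T"
      using from_nat_into_surj[OF countable_clopenin[OF assms(1,2)]] T by blast
    then have "C (n + length Ts) = T"
      by (simp add: C_def)
    then show ?thesis ..
  qed
  moreover have "clopenin X (C i)" for i
    using assms(3) from_nat_into[OF \<open>?K \<noteq> {}\<close>] unfolding C_def by auto
  ultimately show thesis
    using that[of C] by (simp add: C_def)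
qed

lemma clopen_split_separating:
  assumes "stone_space X" "clopenin X U" "x \<in> U" "y \<in> U" "x \<noteq> y"
  obtains U1 U2 where "clopenin X U1" "clopenin X U2" "U1 \<inter> U2 = {}" "U1 \<union> U2 = U"
    "x \<in> U1" "y \<in> U2"
proof -
  have "x \<in> topspace X" "y \<in> topspace X"
    using clopenin_subset[OF assms(2)] assms(3,4) by blast+
  then obtain T where T: "clopenin X T" "x \<in> T" "y \<notin> T"
    using stone_space_separating_clopen[OF assms(1) _ _ assms(5)] by blast
  show thesis
  proof (rule that)
    show "clopenin X (U \<inter> T)" "clopenin X (U - T)"
      using clopenin_Int[OF assms(2) T(1)] clopenin_Diff[OF assms(2) T(1)] .
  qed (use T assms(3,4) in blast)+
qed

lemma clopen_split_three:
  assumes "stone_space X" "clopenin X U" "x \<in> U" "y \<in> U" "z \<in> U" "distinct [x, y, z]"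
  obtains U1 U2 where "clopenin X U1" "clopenin X U2" "U1 \<inter> U2 = {}" "U1 \<union> U2 = U"
    "U1 \<noteq> {}" "two_points U2"
proof -
  obtain P Q where PQ: "clopenin X P" "clopenin X Q" "P \<inter> Q = {}" "P \<union> Q = U" "x \<in> P" "y \<in> Q"
    using clopen_split_separating[OF assms(1-4)] assms(6) by auto
  show thesis
  proof (cases "z \<in> P")
    case True
    then have "two_points P"
      using PQ(5) assms(6) unfolding two_points_def by auto
    with PQ that[of Q P] show thesis
      by blast
  next
    case False
    then have "two_points Q"
      using PQ(4,6) assms(5,6) unfolding two_points_def by auto
    with PQ that[of P Q] show thesis
      by blast
  qed
qed

lemma clopen_split_two_points:
  assumes "stone_space X" "clopenin X U" "two_points U"
  obtains U1 U2 where "clopenin X U1" "clopenin X U2" "U1 \<inter> U2 = {}" "U1 \<union> U2 = U"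
    "U1 \<noteq> {}" "U2 \<noteq> {}"
proof -
  obtain u v where "u \<in> U" "v \<in> U" "u \<noteq> v"
    using assms(3) unfolding two_points_def by blast
  then obtain U1 U2 where "clopenin X U1" "clopenin X U2" "U1 \<inter> U2 = {}" "U1 \<union> U2 = U"
    "u \<in> U1" "v \<in> U2"
    by (rule clopen_split_separating[OF assms(1,2)])
  with that show thesis
    by blast
qed

lemma clopen_split_absorbing:
  assumes "stone_space X" "clopenin X P" "clopenin X Q" "P \<inter> Q = {}" "P \<noteq> {}"
    "x \<in> Q" "y \<in> Q" "z \<in> Q" "distinct [x, y, z]"
  obtains U1 U2 where "clopenin X U1" "clopenin X U2" "U1 \<inter> U2 = {}" "U1 \<union> U2 = P \<union> Q"
    "two_points U1" "two_points U2"
proof -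
  obtain Q1 Q2 where Q: "clopenin X Q1" "clopenin X Q2" "Q1 \<inter> Q2 = {}" "Q1 \<union> Q2 = Q"
    "Q1 \<noteq> {}" "two_points Q2"
    by (rule clopen_split_three[OF assms(1,3,6-9)])
  have "two_points (P \<union> Q1)"
    using assms(4,5) Q(4,5) unfolding two_points_def by blast
  moreover have "clopenin X (P \<union> Q1)"
    using clopenin_Un[OF assms(2) Q(1)] .
  moreover have "(P \<union> Q1) \<inter> Q2 = {}" "(P \<union> Q1) \<union> Q2 = P \<union> Q"
    using assms(4) Q(3,4) by blast+
  ultimately show thesis
    using that Q(2,6) by blast
qed

lemma clopen_split_four:
  assumes "stone_space X" "clopenin X U" "p1 \<in> U" "p2 \<in> U" "p3 \<in> U" "p4 \<in> U"
    "distinct [p1, p2, p3, p4]"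
  obtains U1 U2 where "clopenin X U1" "clopenin X U2" "U1 \<inter> U2 = {}" "U1 \<union> U2 = U"
    "two_points U1" "two_points U2"
proof -
  obtain P Q where PQ: "clopenin X P" "clopenin X Q" "P \<inter> Q = {}" "P \<union> Q = U" "p1 \<in> P" "p2 \<in> Q"
    using clopen_split_separating[OF assms(1-4)] assms(7) by auto
  consider "two_points P" "two_points Q" | "\<not> two_points P" | "\<not> two_points Q"
    by blast
  then show thesis
  proof cases
    case 1
    with PQ that show thesis
      by blast
  next
    case 2
    then have "p3 \<in> Q" "p4 \<in> Q"
      using PQ(4,5) assms(5-7) unfolding two_points_def by auto
    moreover have "P \<noteq> {}" "distinct [p2, p3, p4]"
      using PQ(5) assms(7) by auto
    ultimately obtain U1 U2 where "clopenin X U1" "clopenin X U2" "U1 \<inter> U2 = {}"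
      "U1 \<union> U2 = P \<union> Q" "two_points U1" "two_points U2"
      using clopen_split_absorbing[OF assms(1) PQ(1-3) _ PQ(6)] by blast
    with PQ(4) that show thesis
      by blast
  next
    case 3
    then have "p3 \<in> P" "p4 \<in> P"
      using PQ(4,6) assms(5-7) unfolding two_points_def by auto
    moreover have "Q \<inter> P = {}" "Q \<noteq> {}" "distinct [p1, p3, p4]"
      using PQ(3,6) assms(7) by auto
    ultimately obtain U1 U2 where "clopenin X U1" "clopenin X U2" "U1 \<inter> U2 = {}"
      "U1 \<union> U2 = Q \<union> P" "two_points U1" "two_points U2"
      using clopen_split_absorbing[OF assms(1) PQ(2,1) _ _ PQ(5)] by blast
    with PQ(4) that show thesis
      by blast
  qed
qed

lemma three_points_if_not_card_2:
  assumes "two_points U" "\<not> (finite U \<and> card U = 2)"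
  obtains x y z where "x \<in> U" "y \<in> U" "z \<in> U" "distinct [x, y, z]"
proof -
  obtain x y where xy: "x \<in> U" "y \<in> U" "x \<noteq> y"
    using assms(1) unfolding two_points_def by blast
  have "\<not> U \<subseteq> {x, y}"
  proof
    assume "U \<subseteq> {x, y}"
    then have "U = {x, y}"
      using xy by blast
    with assms(2) xy(3) show False
      by simp
  qed
  then obtain z where "z \<in> U" "z \<notin> {x, y}"
    by blast
  with xy that show thesis
    by simp
qed

lemma side_three_points_if_not_outermost:
  assumes "nonperipheral_cut X \<gamma>" "\<not> outermost_cut X \<gamma>" "V \<in> \<gamma>"
  obtains x y z where "x \<in> V" "y \<in> V" "z \<in> V" "distinct [x, y, z]"
proof (rule three_points_if_not_card_2)
  show "two_points V"
    using nonperipheral_cut_side(4)[OF assms(1,3)] .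
  show "\<not> (finite V \<and> card V = 2)"
    using assms unfolding outermost_cut_def by blast
qed blast

lemma side_with_four_points:
  assumes "nonperipheral_cut X \<gamma>" "\<not> outermost_cut X \<gamma>"
    and "infinite (topspace X) \<or> card (topspace X) \<ge> 7"
  obtains B p1 p2 p3 p4 where "B \<in> \<gamma>" "p1 \<in> B" "p2 \<in> B" "p3 \<in> B" "p4 \<in> B"
    "distinct [p1, p2, p3, p4]"
proof -
  obtain U where U: "U \<in> \<gamma>"
    using assms(1) by (rule nonperipheral_cut_obtain_side)
  have "\<gamma> = {U, topspace X - U}"
    using nonperipheral_cut_side[OF assms(1) U] by blast
  then have U': "topspace X - U \<in> \<gamma>"
    by blast
  obtain x y z where xyz: "x \<in> U" "y \<in> U" "z \<in> U" "distinct [x, y, z]"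
    by (rule side_three_points_if_not_outermost[OF assms(1,2) U])
  obtain x' y' z' where xyz': "x' \<in> topspace X - U" "y' \<in> topspace X - U" "z' \<in> topspace X - U"
    "distinct [x', y', z']"
    by (rule side_three_points_if_not_outermost[OF assms(1,2) U'])
  consider w where "w \<in> U" "w \<notin> {x, y, z}"
    | w where "w \<in> topspace X - U" "w \<notin> {x', y', z'}"
    | "topspace X \<subseteq> set [x, y, z, x', y', z']"
    by auto
  then show thesis
  proof cases
    case 1
    with xyz that[OF U] show thesis
      by simp
  next
    case 2
    with xyz' that[OF U'] show thesis
      by simp
  next
    case 3
    then have "finite (topspace X)" "card (topspace X) \<le> 6"
      using card_mono[OF _ 3] card_length[of "[x, y, z, x', y', z']"] finite_subset[OF 3]
      by auto
    with assms(3) show thesis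
      by simp
  qed
qed

locale split_cut =
  fixes X :: "'a topology" and A A1 A2 A21 A22 B B1 B2 B11 B12 B21 B22 :: "'a set"
  assumes A_subset: "A \<subseteq> topspace X" and B_eq: "B = topspace X - A"
    and split_A: "A1 \<union> A2 = A" "A1 \<inter> A2 = {}"
    and split_A2: "A21 \<union> A22 = A2" "A21 \<inter> A22 = {}"
    and split_B: "B1 \<union> B2 = B" "B1 \<inter> B2 = {}"
    and split_B1: "B11 \<union> B12 = B1" "B11 \<inter> B12 = {}"
    and split_B2: "B21 \<union> B22 = B2" "B21 \<inter> B22 = {}"
    and nonempty: "A1 \<noteq> {}" "A21 \<noteq> {}" "A22 \<noteq> {}" "B11 \<noteq> {}" "B12 \<noteq> {}"
      "B21 \<noteq> {}" "B22 \<noteq> {}"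
    and clopen_pieces: "clopenin X A" "clopenin X A1" "clopenin X A21" "clopenin X B1"
      "clopenin X B11" "clopenin X B21"
begin

abbreviation "E \<equiv> topspace X"

lemmas partition = A_subset B_eq split_A split_A2 split_B split_B1 split_B2

lemma witnesses:
  obtains a1 a21 a22 b11 b12 b21 b22 where "a1 \<in> A1" "a21 \<in> A21" "a22 \<in> A22"
    "b11 \<in> B11" "b12 \<in> B12" "b21 \<in> B21" "b22 \<in> B22"
  using nonempty by blast

end

lemma split_cut_exists:
  assumes stone: "stone_space X" and size: "infinite (topspace X) \<or> card (topspace X) \<ge> 7"
    and \<gamma>: "nonperipheral_cut X \<gamma>" "\<not> outermost_cut X \<gamma>"
  obtains A A1 A2 A21 A22 B B1 B2 B11 B12 B21 B22
  where "split_cut X A A1 A2 A21 A22 B B1 B2 B11 B12 B21 B22" "\<gamma> = {A, B}"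
proof -
  obtain B p1 p2 p3 p4 where B: "B \<in> \<gamma>" "p1 \<in> B" "p2 \<in> B" "p3 \<in> B" "p4 \<in> B"
    "distinct [p1, p2, p3, p4]"
    by (rule side_with_four_points[OF \<gamma> size])
  note B_side = nonperipheral_cut_side[OF \<gamma>(1) B(1)]
  define A where "A = topspace X - B"
  have \<gamma>_eq: "\<gamma> = {A, B}" and A_subset: "A \<subseteq> topspace X" and B_eq: "B = topspace X - A"
    using B_side(1,3) unfolding A_def by auto
  have "A \<in> \<gamma>" "clopenin X A" "clopenin X B"
    using \<gamma>_eq B_side(2) clopenin_topspace_diff unfolding A_def by auto
  obtain x y z where "x \<in> A" "y \<in> A" "z \<in> A" "distinct [x, y, z]"
    by (rule side_three_points_if_not_outermost[OF \<gamma> \<open>A \<in> \<gamma>\<close>])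
  then obtain A1 A2 where A: "clopenin X A1" "clopenin X A2" "A1 \<inter> A2 = {}" "A1 \<union> A2 = A"
    "A1 \<noteq> {}" "two_points A2"
    by (rule clopen_split_three[OF stone \<open>clopenin X A\<close>])
  obtain B1 B2 where B12: "clopenin X B1" "clopenin X B2" "B1 \<inter> B2 = {}" "B1 \<union> B2 = B"
    "two_points B1" "two_points B2"
    by (rule clopen_split_four[OF stone \<open>clopenin X B\<close> B(2-6)])
  obtain A21 A22 where A2: "clopenin X A21" "clopenin X A22" "A21 \<inter> A22 = {}" "A21 \<union> A22 = A2"
    "A21 \<noteq> {}" "A22 \<noteq> {}"
    by (rule clopen_split_two_points[OF stone A(2,6)])
  obtain B11 B12 where B1: "clopenin X B11" "clopenin X B12" "B11 \<inter> B12 = {}" "B11 \<union> B12 = B1"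
    "B11 \<noteq> {}" "B12 \<noteq> {}"
    by (rule clopen_split_two_points[OF stone B12(1,5)])
  obtain B21 B22 where B2: "clopenin X B21" "clopenin X B22" "B21 \<inter> B22 = {}" "B21 \<union> B22 = B2"
    "B21 \<noteq> {}" "B22 \<noteq> {}"
    by (rule clopen_split_two_points[OF stone B12(2,6)])
  have "split_cut X A A1 A2 A21 A22 B B1 B2 B11 B12 B21 B22"
    using A_subset B_eq A A2 B12 B1 B2 \<open>clopenin X A\<close> by unfold_locales auto
  with \<gamma>_eq that show thesis
    by blast
qed

text \<open>The enumeration \<open>C\<close> of all clopen sets starts with \<open>A\<close>, \<open>A1 \<union> B1\<close> and
  \<open>A21 \<union> B11 \<union> B21\<close>, so that the atoms of level two are \<open>A1\<close>, \<open>A2\<close>, \<open>B1\<close>, \<open>B2\<close> and those of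
  level three are the seven pieces.\<close>
locale refined_cut = split_cut +
  fixes C :: "nat \<Rightarrow> 'a set"
  assumes stone: "stone_space X"
    and C_clopen: "\<And>i. clopenin X (C i)"
    and C_enumerating: "\<And>T. clopenin X T \<Longrightarrow> \<exists>m. C m = T"
    and C_prefix: "\<And>i. i < 3 \<Longrightarrow> C i = [A, A1 \<union> B1, A21 \<union> B11 \<union> B21] ! i"
begin

abbreviation "\<Gamma> \<equiv> cuts_of X (atoms X C)"

lemma C_012: "C 0 = A" "C 1 = A1 \<union> B1" "C 2 = A21 \<union> B11 \<union> B21"
  using C_prefix[of 0] C_prefix[of 1] C_prefix[of 2] by simp_all

lemma tree: "clopen_tree X (atoms X C)"
  using atoms_clopen_tree[OF stone _ C_clopen C_enumerating] nonempty(1) partition by blast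

lemma pants: "pants_decomposition X \<Gamma>"
  by (rule clopen_tree.pants_decomposition_cuts_of[OF tree])

lemma atom_1: "x \<in> E \<Longrightarrow> atom X C 1 x = (if x \<in> A then A else B)"
  unfolding atom_def using C_012 partition by auto

lemma atom_2:
  assumes "x \<in> E"
  shows "atom X C 2 x = (if x \<in> A1 then A1 else if x \<in> A2 then A2 else if x \<in> B1 then B1 else B2)"
proof -
  have "atom X C 2 x = E \<inter> {y. y \<in> A \<longleftrightarrow> x \<in> A} \<inter> {y. y \<in> A1 \<union> B1 \<longleftrightarrow> x \<in> A1 \<union> B1}"
    by (simp only: numeral_2_eq_2 atom_Suc atom_0) (simp add: C_prefix)
  also have "\<dots> = (if x \<in> A1 then A1 else if x \<in> A2 then A2 else if x \<in> B1 then B1 else B2)"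
    using assms partition by (cases "x \<in> A1"; cases "x \<in> A2"; cases "x \<in> B1") auto
  finally show ?thesis .
qed

lemma atoms_below_3:
  assumes "k < 3" "x \<in> E"
  shows "atom X C k x \<in> {E, A, B, A1, A2, B1, B2}"
proof -
  consider "k = 0" | "k = 1" | "k = 2"
    using assms(1) by arith
  then show ?thesis
  proof cases
    case 1
    then show ?thesis
      by (simp add: atom_0)
  next
    case 2
    show ?thesis
      unfolding \<open>k = 1\<close> atom_1[OF assms(2)] by simp
  next
    case 3
    show ?thesis
      unfolding \<open>k = 2\<close> atom_2[OF assms(2)] by simp
  qed
qed

lemma sides_in_atoms: "A \<in> atoms X C" "B \<in> atoms X C" "A2 \<in> atoms X C" "B1 \<in> atoms X C"
  "B2 \<in> atoms X C"
proof -
  obtain a1 a21 a22 b11 b12 b21 b22 where "a1 \<in> A1" "a21 \<in> A21" "b11 \<in> B11" "b21 \<in> B21"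
    by (rule witnesses)
  then have pts: "a1 \<in> E" "a1 \<in> A" "a21 \<in> E" "a21 \<notin> A1" "a21 \<in> A2"
    "b11 \<in> E" "b11 \<notin> A" "b11 \<notin> A1" "b11 \<notin> A2" "b11 \<in> B1"
    "b21 \<in> E" "b21 \<notin> A1" "b21 \<notin> A2" "b21 \<notin> B1"
    using partition by auto
  have atom_in: "atom X C n x \<in> atoms X C" if "x \<in> E" for n x
    using that unfolding atoms_def by blast
  show "A \<in> atoms X C"
    using atom_in[OF pts(1), of 1] atom_1[OF pts(1)] pts(2) by simp
  show "B \<in> atoms X C"
    using atom_in[OF pts(6), of 1] atom_1[OF pts(6)] pts(7) by simp
  show "A2 \<in> atoms X C"
    using atom_in[OF pts(3), of 2] atom_2[OF pts(3)] pts(4,5) by simp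
  show "B1 \<in> atoms X C"
    using atom_in[OF pts(6), of 2] atom_2[OF pts(6)] pts(8-10) by simp
  show "B2 \<in> atoms X C"
    using atom_in[OF pts(11), of 2] atom_2[OF pts(11)] pts(12-14) by simp
qed

lemma two_points_sides: "two_points A" "two_points B" "two_points A2" "two_points B1" "two_points B2"
  "two_points (E - A2)" "two_points (E - B1)" "two_points (E - B2)"
proof -
  obtain a1 a21 a22 b11 b12 b21 b22 where pts: "a1 \<in> A1" "a21 \<in> A21" "a22 \<in> A22"
    "b11 \<in> B11" "b12 \<in> B12" "b21 \<in> B21" "b22 \<in> B22"
    by (rule witnesses)
  have "a1 \<in> A" "a21 \<in> A" "a1 \<noteq> a21" "b11 \<in> B" "b21 \<in> B" "b11 \<noteq> b21"
    "a21 \<in> A2" "a22 \<in> A2" "a21 \<noteq> a22" "b11 \<in> B1" "b12 \<in> B1" "b11 \<noteq> b12"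
    "b21 \<in> B2" "b22 \<in> B2" "b21 \<noteq> b22" "b11 \<in> E - A2" "b21 \<in> E - A2"
    "a1 \<in> E - B1" "a21 \<in> E - B1" "a1 \<in> E - B2" "a21 \<in> E - B2"
    using pts partition by auto
  then show "two_points A" "two_points B" "two_points A2" "two_points B1" "two_points B2"
    "two_points (E - A2)" "two_points (E - B1)" "two_points (E - B2)"
    unfolding two_points_def by blast+
qed

lemma cut_in_\<Gamma>: "N \<in> atoms X C \<Longrightarrow> two_points N \<Longrightarrow> two_points (E - N) \<Longrightarrow> {N, E - N} \<in> \<Gamma>"
  using clopen_tree.cuts_of_iff[OF tree] by blast

lemma \<gamma>_in_\<Gamma>: "{A, B} \<in> \<Gamma>"
proof -
  have "E - A = B"
    using partition by blast
  then show ?thesis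
    using cut_in_\<Gamma>[OF sides_in_atoms(1) two_points_sides(1)] two_points_sides(2) by simp
qed

lemma inner_cut_in_\<Gamma>:
  assumes "D \<in> {A2, B1, B2}"
  shows "{D, E - D} \<in> \<Gamma>"
  using assms cut_in_\<Gamma>[OF sides_in_atoms(3) two_points_sides(3,6)]
    cut_in_\<Gamma>[OF sides_in_atoms(4) two_points_sides(4,7)]
    cut_in_\<Gamma>[OF sides_in_atoms(5) two_points_sides(5,8)] by blast

lemma inner_cut_ne_\<gamma>:
  assumes "D \<in> {A2, B1, B2}"
  shows "{A, B} \<noteq> {D, E - D}"
proof -
  obtain a1 a21 a22 b11 b12 b21 b22 where pts: "a1 \<in> A1" "a21 \<in> A21" "a22 \<in> A22"
    "b11 \<in> B11" "b12 \<in> B12" "b21 \<in> B21" "b22 \<in> B22"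
    by (rule witnesses)
  have "a1 \<in> A - A2" "a21 \<in> A2 - B" "b11 \<in> B1 - A" "b21 \<in> B - B1" "b21 \<in> B2 - A"
    "b11 \<in> B - B2"
    using pts partition by auto
  then have "D \<noteq> A" "D \<noteq> B"
    using assms by blast+
  then show ?thesis
    by (auto simp: doubleton_eq_iff)
qed

lemma crossing_cut_low_level:
  assumes "atom_saturated X C 3 G" "e \<in> \<Gamma>" "crosses {G, E - G} e"
  obtains N where "N \<in> {A, B, A1, A2, B1, B2}" "e = {N, E - N}" "N \<inter> G \<noteq> {}" "N - G \<noteq> {}"
proof -
  obtain N where N: "N \<in> atoms X C" "two_points (E - N)" "e = {N, E - N}"
    using assms(2) unfolding clopen_tree.cuts_of_iff[OF tree] by blast
  have "N \<subseteq> E"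
    by (rule clopen_tree.member_subset[OF tree N(1)])
  have "G \<inter> N \<noteq> {}" "(E - G) \<inter> N \<noteq> {}"
    using assms(3) unfolding N(3) crosses_doubleton by auto
  then have split: "N \<inter> G \<noteq> {}" "N - G \<noteq> {}"
    by blast+
  obtain k x where k: "N = atom X C k x" "x \<in> E"
    using N(1) unfolding atoms_def by blast
  from split have "k < 3"
    unfolding k(1) by (rule splitting_atom_level[OF assms(1) k(2)])
  then have "N \<in> {E, A, B, A1, A2, B1, B2}"
    unfolding k(1) using k(2) by (rule atoms_below_3)
  moreover have "N \<noteq> E"
    using N(2) unfolding two_points_def by blast
  ultimately have "N \<in> {A, B, A1, A2, B1, B2}"
    by simp
  then show thesis
    by (rule that[OF _ N(3) split])
qed

lemma adjacent_to_\<gamma>I: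
  assumes D: "D \<in> {A2, B1, B2}"
    and G: "clopenin X G" "atom_saturated X C 3 G" "two_points G" "two_points (E - G)"
    and crossing: "crosses {G, E - G} {A, B}" "crosses {G, E - G} {D, E - D}"
    and others: "\<And>N. N \<in> {A1, A2, B1, B2} \<Longrightarrow> N \<noteq> D \<Longrightarrow> N \<subseteq> G \<or> N \<inter> G = {}"
  shows "adjacent_in X \<Gamma> {A, B} {D, E - D}"
proof -
  have "e = {A, B} \<or> e = {D, E - D}" if e: "e \<in> \<Gamma>" "crosses {G, E - G} e" for e
  proof -
    obtain N where N: "N \<in> {A, B, A1, A2, B1, B2}" "e = {N, E - N}" "N \<inter> G \<noteq> {}" "N - G \<noteq> {}"
      using crossing_cut_low_level[OF G(2) e] .
    then have "N \<in> {A, B, D}"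
      using others by blast
    moreover have "E - A = B" "E - B = A"
      using partition by blast+
    ultimately show ?thesis
      using N(2) by (auto simp: insert_commute)
  qed
  then show ?thesis
    unfolding adjacent_in_def
    using \<gamma>_in_\<Gamma> inner_cut_in_\<Gamma>[OF D] inner_cut_ne_\<gamma>[OF D] nonperipheral_cutI[OF G(1,3,4)]
      crossing by blast
qed

lemma adjacent_B1: "adjacent_in X \<Gamma> {A, B} {B1, E - B1}"
proof -
  obtain a1 a21 a22 b11 b12 b21 b22 where pts: "a1 \<in> A1" "a21 \<in> A21" "a22 \<in> A22"
    "b11 \<in> B11" "b12 \<in> B12" "b21 \<in> B21" "b22 \<in> B22"
    by (rule witnesses)
  define G where "G = (E - C 1) \<union> (C 1 \<inter> C 2)"
  have G_eq: "G = A2 \<union> B2 \<union> B11"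
    unfolding G_def C_012 using partition by auto
  have "a21 \<in> G \<inter> A" "b11 \<in> G \<inter> B1" "a1 \<in> (E - G) \<inter> (E - B1)" "b12 \<in> (E - G) \<inter> B1"
    "a21 \<in> E - B1" "a1 \<in> A" "b11 \<in> B" "b12 \<in> B"
    unfolding G_eq using pts partition by auto
  moreover have "A1 \<inter> G = {}" "A2 \<subseteq> G" "B2 \<subseteq> G"
    unfolding G_eq using partition by blast+
  ultimately show ?thesis
  proof (intro adjacent_to_\<gamma>I)
    show "clopenin X G"
      unfolding G_def by (intro clopenin_Un clopenin_Int clopenin_topspace_diff C_clopen)
    show "atom_saturated X C 3 G"
      unfolding G_def
      by (intro atom_saturated_Un atom_saturated_Int atom_saturated_Diff atom_saturated_topspace
          atom_saturated_C) simp_all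
  qed (auto simp: two_points_def crosses_doubleton)
qed

lemma adjacent_B2: "adjacent_in X \<Gamma> {A, B} {B2, E - B2}"
proof -
  obtain a1 a21 a22 b11 b12 b21 b22 where pts: "a1 \<in> A1" "a21 \<in> A21" "a22 \<in> A22"
    "b11 \<in> B11" "b12 \<in> B12" "b21 \<in> B21" "b22 \<in> B22"
    by (rule witnesses)
  define G where "G = (C 0 - C 1) \<union> (C 1 - C 0) \<union> (C 2 - C 0 - C 1)"
  have G_eq: "G = A2 \<union> B1 \<union> B21"
    unfolding G_def C_012 using partition by auto
  have "a21 \<in> G \<inter> A" "b21 \<in> G \<inter> B2" "a1 \<in> (E - G) \<inter> (E - B2)" "b22 \<in> (E - G) \<inter> B2"
    "a21 \<in> E - B2" "a1 \<in> A" "b21 \<in> B" "b22 \<in> B"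
    unfolding G_eq using pts partition by auto
  moreover have "A1 \<inter> G = {}" "A2 \<subseteq> G" "B1 \<subseteq> G"
    unfolding G_eq using partition by blast+
  ultimately show ?thesis
  proof (intro adjacent_to_\<gamma>I)
    show "clopenin X G"
      unfolding G_def by (intro clopenin_Un clopenin_Diff C_clopen)
    show "atom_saturated X C 3 G"
      unfolding G_def by (intro atom_saturated_Un atom_saturated_Diff atom_saturated_C) simp_all
  qed (auto simp: two_points_def crosses_doubleton)
qed

lemma adjacent_A2: "adjacent_in X \<Gamma> {A, B} {A2, E - A2}"
proof -
  obtain a1 a21 a22 b11 b12 b21 b22 where pts: "a1 \<in> A1" "a21 \<in> A21" "a22 \<in> A22"
    "b11 \<in> B11" "b12 \<in> B12" "b21 \<in> B21" "b22 \<in> B22"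
    by (rule witnesses)
  define G where "G = (C 0 \<inter> C 2) \<union> (C 1 - C 0)"
  have G_eq: "G = A21 \<union> B1"
    unfolding G_def C_012 using partition by auto
  have "a21 \<in> G \<inter> A2" "b11 \<in> G \<inter> (E - A2)" "a1 \<in> (E - G) \<inter> (E - A2)" "a22 \<in> (E - G) \<inter> A2"
    "b21 \<in> (E - G) \<inter> B" "a21 \<in> A" "a1 \<in> A" "b11 \<in> B"
    unfolding G_eq using pts partition by auto
  moreover have "A1 \<inter> G = {}" "B1 \<subseteq> G" "B2 \<inter> G = {}"
    unfolding G_eq using partition by blast+
  ultimately show ?thesis
  proof (intro adjacent_to_\<gamma>I)
    show "clopenin X G"
      unfolding G_def by (intro clopenin_Un clopenin_Int clopenin_Diff C_clopen)
    show "atom_saturated X C 3 G"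
      unfolding G_def by (intro atom_saturated_Un atom_saturated_Int atom_saturated_Diff atom_saturated_C)
        simp_all
  qed (auto simp: two_points_def crosses_doubleton)
qed

lemma not_valence_le_two: "\<not> valence_le_two X \<Gamma> {A, B}"
proof
  let ?three = "{{A2, E - A2}, {B1, E - B1}, {B2, E - B2}}"
  assume "valence_le_two X \<Gamma> {A, B}"
  then have "finite {d. adjacent_in X \<Gamma> {A, B} d}" "card {d. adjacent_in X \<Gamma> {A, B} d} \<le> 2"
    by (simp_all add: valence_le_two_def)
  moreover have "?three \<subseteq> {d. adjacent_in X \<Gamma> {A, B} d}"
    using adjacent_A2 adjacent_B1 adjacent_B2 by blast
  moreover have "card ?three = 3"
  proof -
    obtain a1 a21 a22 b11 b12 b21 b22 where pts: "a1 \<in> A1" "a21 \<in> A21" "a22 \<in> A22"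
      "b11 \<in> B11" "b12 \<in> B12" "b21 \<in> B21" "b22 \<in> B22"
      by (rule witnesses)
    have "a21 \<in> A2 - B1" "a1 \<in> (E - B1) - A2" "a21 \<in> A2 - B2" "a1 \<in> (E - B2) - A2"
      "b11 \<in> B1 - B2" "a1 \<in> (E - B2) - B1"
      using pts partition by auto
    then have "A2 \<noteq> B1" "A2 \<noteq> E - B1" "A2 \<noteq> B2" "A2 \<noteq> E - B2" "B1 \<noteq> B2" "B1 \<noteq> E - B2"
      by blast+
    then show ?thesis
      by (auto simp: doubleton_eq_iff)
  qed
  ultimately show False
    using card_mono[of "{d. adjacent_in X \<Gamma> {A, B} d}" ?three] by simp
qed

end

lemma not_valence_le_two_if_not_outermost:
  assumes stone: "stone_space X" and "second_countable X"
    and size: "infinite (topspace X) \<or> card (topspace X) \<ge> 7"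
    and \<gamma>: "nonperipheral_cut X \<gamma>" "\<not> outermost_cut X \<gamma>"
  obtains \<Gamma> where "pants_decomposition X \<Gamma>" "\<gamma> \<in> \<Gamma>" "\<not> valence_le_two X \<Gamma> \<gamma>"
proof -
  obtain A A1 A2 A21 A22 B B1 B2 B11 B12 B21 B22
    where split: "split_cut X A A1 A2 A21 A22 B B1 B2 B11 B12 B21 B22" and "\<gamma> = {A, B}"
    by (rule split_cut_exists[OF stone size \<gamma>])
  have "compact_space X"
    using stone by (simp add: stone_space_def)
  moreover have "\<forall>T\<in>set [A, A1 \<union> B1, A21 \<union> B11 \<union> B21]. clopenin X T"
    using split_cut.clopen_pieces[OF split] by (simp add: clopenin_Un)
  ultimately obtain C
    where "\<forall>i<length [A, A1 \<union> B1, A21 \<union> B11 \<union> B21]. C i = [A, A1 \<union> B1, A21 \<union> B11 \<union> B21] ! i"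
      "\<forall>i. clopenin X (C i)" "\<forall>T. clopenin X T \<longrightarrow> (\<exists>m. C m = T)"
    by (rule clopen_enumeration[OF _ \<open>second_countable X\<close>])
  with split stone have "refined_cut X A A1 A2 A21 A22 B B1 B2 B11 B12 B21 B22 C"
    by (simp add: refined_cut_def refined_cut_axioms_def numeral_3_eq_3)
  then interpret refined_cut X A A1 A2 A21 A22 B B1 B2 B11 B12 B21 B22 C .
  show thesis
    using that[OF pants] \<gamma>_in_\<Gamma> not_valence_le_two \<open>\<gamma> = {A, B}\<close> by simp
qed

theorem mainTheorem7:
  fixes X :: "'a topology" and \<gamma> :: "'a set set"
  assumes "stone_space X" and "second_countable X"
    and "infinite (topspace X) \<or> card (topspace X) \<ge> 7"
    and "nonperipheral_cut X \<gamma>"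
  shows "outermost_cut X \<gamma> \<longleftrightarrow>
           (\<forall>\<Gamma>. pants_decomposition X \<Gamma> \<and> \<gamma> \<in> \<Gamma> \<longrightarrow> valence_le_two X \<Gamma> \<gamma>)"
proof
  assume "outermost_cut X \<gamma>"
  then show "\<forall>\<Gamma>. pants_decomposition X \<Gamma> \<and> \<gamma> \<in> \<Gamma> \<longrightarrow> valence_le_two X \<Gamma> \<gamma>"
    using valence_le_two_if_outermost by blast
next
  assume "\<forall>\<Gamma>. pants_decomposition X \<Gamma> \<and> \<gamma> \<in> \<Gamma> \<longrightarrow> valence_le_two X \<Gamma> \<gamma>"
  then show "outermost_cut X \<gamma>"
    using not_valence_le_two_if_not_outermost[OF assms] by blast
qed

end
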